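(* Let $\Gamma^{\mathsf b}$ be a base game. There exists $\delta>0$ such that for every $\varepsilon\in(0,\delta)$, in the money-burning $\varepsilon$-game $\Gamma^{\mathsf{mb}}[\varepsilon]$ one has $\zeta(\mathbb U^\infty(S))=\{((0,a^*_{\mathrm a}),a^*_{\mathrm b})\}$, i.e., every strategy profile surviving Iterative Conditional B-Dominance leads to Ann burning nothing and the profile $(a^*_{\mathrm a},a^*_{\mathrm b})$ being played.
   Context: Base game: a two-player strategic game $\Gamma^{\mathsf b}=\langle\{\mathrm a,\mathrm b\},(A_j,v_j)_{j}\rangle$ with finite action sets $A_{\mathrm a},A_{\mathrm b}$ and utility functions $v_j:A_{\mathrm a}\times A_{\mathrm b}\to\mathbb R$, for which there exist $a^*_{\mathrm a}\in A_{\mathrm a}$, $a^*_{\mathrm b}\in A_{\mathrm b}$ with $v_{\mathrm a}(a^*_{\mathrm a},a^*_{\mathrm b})>v_{\mathrm a}(a_{\mathrm a},a_{\mathrm b})$ for every $(a_{\mathrm a},a_{\mathrm b})\neq(a^*_{\mathrm a},a^*_{\mathrm b})$, and $v_{\mathrm b}(a^*_{\mathrm a},a^*_{\mathrm b})>v_{\mathrm b}(a^*_{\mathrm a},a_{\mathrm b})$ for every $a_{\mathrm b}\neq a^*_{\mathrm b}$. Money-burning $\varepsilon$-game ($\varepsilon>0$): Ann first publicly chooses $n\in\mathbb N=\{0,1,2,\dots\}$ (burning $\varepsilon n$), then Ann and Bob simultaneously play the base game. Ann's strategies are $S_{\mathrm a}=\mathbb N\times A_{\mathrm a}$, Bob's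 are $S_{\mathrm b}=A_{\mathrm b}^{\mathbb N}$ (functions $s_{\mathrm b}:\mathbb N\to A_{\mathrm b}$), $S=S_{\mathrm a}\times S_{\mathrm b}$; the outcome of $((n,a_{\mathrm a}),s_{\mathrm b})$ is $\zeta((n,a_{\mathrm a}),s_{\mathrm b})=((n,a_{\mathrm a}),s_{\mathrm b}(n))$; Ann's preference over outcomes is represented by $((n,a_{\mathrm a}),a_{\mathrm b})\mapsto v_{\mathrm a}(a_{\mathrm a},a_{\mathrm b})-\varepsilon n$ and Bob's by $((n,a_{\mathrm a}),a_{\mathrm b})\mapsto v_{\mathrm b}(a_{\mathrm a},a_{\mathrm b})$ (write $\succsim_j,\succ_j$). Information sets: Ann has the root (reached by all profiles) and, for each $n$, the history $n$; Bob has, for each $n\in\mathbb N$, the history $n$. The profiles reaching history $n$ are $(\{n\}\times A_{\mathrm a})\times S_{\mathrm b}$. For a restriction $R=R_{\mathrm a}\times R_{\mathrm b}\subseteq S$ (nonempty) and an information set $h$ of player $i$ that strategy $s_i$ reaches, let $R^i(h)=R_i(h)\times R_{-i}(h)$ be the profiles in $R$ reaching $h$. Dominance: for $P=P_i\times P_{-i}$, $s_i\in P_i$ is weakly dominated relative to $P$ by $t_i\in P_i$ if $\zeta(t_i,s_{-i})\succsim_i\zeta(s_i,s_{-i})$ for all $s_{-i}\in P_{-i}$ with $\succ_i$ for some; B-dominated w.r.t. $P$ if for every nonempty $Q_{-i}\subseteq P_{-i}$ it is weakly dominated relative to $P_i\times Q_{-i}$ by some strategy in $P_i$. $s_i\in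 R_i$ is conditionally B-dominated w.r.t. $R$ if for some information set $h$ of $i$ reached by $s_i$ with $R^i(h)\ne\emptyset$, $s_i$ is B-dominated w.r.t. $R^i(h)$. $\mathbb U_i(R)$ is the set of $s_i\in R_i$ not conditionally B-dominated w.r.t. $R$, $\mathbb U(R)=\mathbb U_{\mathrm a}(R)\times\mathbb U_{\mathrm b}(R)$; $\mathbb U^0(S)=S$, $\mathbb U^n(S)=\mathbb U(\mathbb U^{n-1}(S))$, $\mathbb U^\infty(S)=\bigcap_{\ell\ge0}\mathbb U^\ell(S)$. *)

theory Defs
  imports Complex_Main
begin

text \<open>Money-burning epsilon-game over a two-player base game with action types 'a (Ann)
 and 'b (Bob). Ann's strategies: nat \<times> 'a; Bob's strategies: nat \<Rightarrow> 'b.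
 A restriction R = Ra \<times> Rb is represented by the pair (Ra, Rb).\<close>

type_synonym ('a,'b) restr = "(nat \<times> 'a) set \<times> (nat \<Rightarrow> 'b) set"

datatype info = Root | Hist nat

definition ann_infosets :: "info set" where "ann_infosets = UNIV"
definition bob_infosets :: "info set" where "bob_infosets = range Hist"

fun reaches :: "info \<Rightarrow> (nat \<times> 'a) \<times> (nat \<Rightarrow> 'b) \<Rightarrow> bool" where
  "reaches Root p = True"
| "reaches (Hist n) p = (fst (fst p) = n)"

text \<open>Strategy s_i reaches h iff some profile (s_i, s_-i) reaches h.  Spelled out:
 Ann's (m,a) reaches the root and history m; every Bob strategy reaches every history
 (Bob does not move at the root).\<close>
definition ann_reaches :: "info \<Rightarrow> nat \<times> 'a \<Rightarrow> bool" where
  "ann_reaches h sa = (case h of Root \<Rightarrow> True | Hist n \<Rightarrow> fst sa = n)"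

definition bob_reaches :: "info \<Rightarrow> (nat \<Rightarrow> 'b) \<Rightarrow> bool" where
  "bob_reaches h sb = (case h of Root \<Rightarrow> False | Hist n \<Rightarrow> True)"

text \<open>R_a(h) and R_b(h): the components of R^i(h), the profiles of R reaching h.\<close>
definition restrA :: "('a,'b) restr \<Rightarrow> info \<Rightarrow> (nat \<times> 'a) set" where
  "restrA R h = {sa \<in> fst R. \<exists>sb \<in> snd R. reaches h (sa, sb)}"

definition restrB :: "('a,'b) restr \<Rightarrow> info \<Rightarrow> (nat \<Rightarrow> 'b) set" where
  "restrB R h = {sb \<in> snd R. \<exists>sa \<in> fst R. reaches h (sa, sb)}"

definition outcome :: "nat \<times> 'a \<Rightarrow> (nat \<Rightarrow> 'b) \<Rightarrow> (nat \<times> 'a) \<times> 'b" where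
  "outcome sa sb = (sa, sb (fst sa))"

definition uA :: "real \<Rightarrow> ('a \<Rightarrow> 'b \<Rightarrow> real) \<Rightarrow> (nat \<times> 'a) \<times> 'b \<Rightarrow> real" where
  "uA eps va z = va (snd (fst z)) (snd z) - eps * real (fst (fst z))"

definition uB :: "('a \<Rightarrow> 'b \<Rightarrow> real) \<Rightarrow> (nat \<times> 'a) \<times> 'b \<Rightarrow> real" where
  "uB vb z = vb (snd (fst z)) (snd z)"

definition weakly_dominated :: "('s \<Rightarrow> 'o \<Rightarrow> real) \<Rightarrow> 's set \<Rightarrow> 'o set \<Rightarrow> 's \<Rightarrow> 's \<Rightarrow> bool" where
  "weakly_dominated u Pi Po s t \<longleftrightarrow> s \<in> Pi \<and> t \<in> Pi \<and>
     (\<forall>y\<in>Po. u s y \<le> u t y) \<and> (\<exists>y\<in>Po. u s y < u t y)"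

definition B_dominated :: "('s \<Rightarrow> 'o \<Rightarrow> real) \<Rightarrow> 's set \<Rightarrow> 'o set \<Rightarrow> 's \<Rightarrow> bool" where
  "B_dominated u Pi Po s \<longleftrightarrow>
     (\<forall>Q. Q \<subseteq> Po \<and> Q \<noteq> {} \<longrightarrow> (\<exists>t\<in>Pi. weakly_dominated u Pi Q s t))"

definition payA :: "real \<Rightarrow> ('a \<Rightarrow> 'b \<Rightarrow> real) \<Rightarrow> nat \<times> 'a \<Rightarrow> (nat \<Rightarrow> 'b) \<Rightarrow> real" where
  "payA eps va sa sb = uA eps va (outcome sa sb)"

definition payB :: "('a \<Rightarrow> 'b \<Rightarrow> real) \<Rightarrow> (nat \<Rightarrow> 'b) \<Rightarrow> nat \<times> 'a \<Rightarrow> real" where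
  "payB vb sb sa = uB vb (outcome sa sb)"

definition condB_domA :: "real \<Rightarrow> ('a \<Rightarrow> 'b \<Rightarrow> real) \<Rightarrow> ('a,'b) restr \<Rightarrow> nat \<times> 'a \<Rightarrow> bool" where
  "condB_domA eps va R sa \<longleftrightarrow> (\<exists>h\<in>ann_infosets. ann_reaches h sa \<and>
      restrA R h \<times> restrB R h \<noteq> {} \<and>
      B_dominated (payA eps va) (restrA R h) (restrB R h) sa)"

definition condB_domB :: "('a \<Rightarrow> 'b \<Rightarrow> real) \<Rightarrow> ('a,'b) restr \<Rightarrow> (nat \<Rightarrow> 'b) \<Rightarrow> bool" where
  "condB_domB vb R sb \<longleftrightarrow> (\<exists>h\<in>bob_infosets. bob_reaches h sb \<and>
      restrB R h \<times> restrA R h \<noteq> {} \<and>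
      B_dominated (payB vb) (restrB R h) (restrA R h) sb)"

definition Uop :: "real \<Rightarrow> ('a \<Rightarrow> 'b \<Rightarrow> real) \<Rightarrow> ('a \<Rightarrow> 'b \<Rightarrow> real) \<Rightarrow> ('a,'b) restr \<Rightarrow> ('a,'b) restr" where
  "Uop eps va vb R = ({sa \<in> fst R. \<not> condB_domA eps va R sa}, {sb \<in> snd R. \<not> condB_domB vb R sb})"

definition Uiter :: "real \<Rightarrow> ('a \<Rightarrow> 'b \<Rightarrow> real) \<Rightarrow> ('a \<Rightarrow> 'b \<Rightarrow> real) \<Rightarrow> nat \<Rightarrow> ('a,'b) restr" where
  "Uiter eps va vb n = (Uop eps va vb ^^ n) (UNIV, UNIV)"

text \<open>U^\<infinity>(S) = \<Inter>_l U^l(S); intersection of products is the product of intersections.\<close>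
definition Uinf :: "real \<Rightarrow> ('a \<Rightarrow> 'b \<Rightarrow> real) \<Rightarrow> ('a \<Rightarrow> 'b \<Rightarrow> real) \<Rightarrow> ('a,'b) restr" where
  "Uinf eps va vb = ((\<Inter>l. fst (Uiter eps va vb l)), (\<Inter>l. snd (Uiter eps va vb l)))"

definition outcomes :: "('a,'b) restr \<Rightarrow> ((nat \<times> 'a) \<times> 'b) set" where
  "outcomes R = {outcome sa sb | sa sb. sa \<in> fst R \<and> sb \<in> snd R}"

end

theory Submission
  imports Defs "HOL-Library.FuncSet"
begin

text \<open>
  Bob's surviving strategies always form a product of nonempty action sets, one per history, so
  his elimination acts history by history, and \<open>(0, a\<^sup>*\<^sub>a)\<close> together with \<open>a\<^sup>*\<^sub>b\<close> at history 0
  is never eliminated.  The core is a forward-induction argument on the payoff Ann can guarantee.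
  Let \<open>m\<close> be Ann's second-best base payoff.  If some surviving strategy guarantees more than
  \<open>m - \<epsilon> n\<close>, every \<open>(n, a)\<close> with \<open>a \<noteq> a\<^sup>*\<^sub>a\<close> is eliminated, after which Bob answers history \<open>n\<close>
  only with \<open>a\<^sup>*\<^sub>b\<close>; then \<open>(n, a\<^sup>*\<^sub>a)\<close> guarantees \<open>v\<^sub>a(a\<^sup>*) - \<epsilon> n\<close>, and it can only have been
  eliminated if that value was already guaranteed.  Since \<open>\<epsilon> < v\<^sub>a(a\<^sup>*) - m\<close>, the value
  \<open>v\<^sub>a(a\<^sup>*) - \<epsilon> (n + 1)\<close> exceeds \<open>m - \<epsilon> n\<close>, so descending from a large \<open>n\<close> Ann eventually
  guarantees \<open>v\<^sub>a(a\<^sup>*)\<close>.  From then on only \<open>(0, a\<^sup>*\<^sub>a)\<close> survives, and Bob answers it with \<open>a\<^sup>*\<^sub>b\<close>.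
\<close>

lemma strict_max_gap:
  fixes f :: "'a::finite \<Rightarrow> real"
  assumes "\<forall>x. x \<noteq> p \<longrightarrow> f x < f p"
  shows "\<exists>m < f p. \<forall>x. x \<noteq> p \<longrightarrow> f x \<le> m"
proof -
  define V where "V = insert (f p - 1) (f ` (UNIV - {p}))"
  have "finite V" by (simp add: V_def)
  moreover have "Max V \<in> V" using \<open>finite V\<close> by (intro Max_in) (auto simp: V_def)
  ultimately show ?thesis
    using assms by (intro exI[of _ "Max V"]) (auto simp: V_def)
qed

lemma Inter_decseq_nonempty:
  fixes X :: "nat \<Rightarrow> 'a::finite set"
  assumes "decseq X" and "\<And>k. X k \<noteq> {}"
  shows "(\<Inter>k. X k) \<noteq> {}"
proof
  assume "(\<Inter>k. X k) = {}"
  then obtain f where f: "\<And>x. x \<notin> X (f x)" by (metis INT_iff empty_iff)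
  obtain x where x: "x \<in> X (Max (range f))" using assms(2) by blast
  have "X (Max (range f)) \<subseteq> X (f x)" using decseqD[OF assms(1)] by simp
  then show False using f x by blast
qed

lemma Pi_UNIV_projection:
  assumes "\<forall>n. Bs n \<noteq> {}"
  shows "(\<lambda>f. f n) ` Pi UNIV Bs = Bs n"
proof
  show "(\<lambda>f. f n) ` Pi UNIV Bs \<subseteq> Bs n" by auto
  show "Bs n \<subseteq> (\<lambda>f. f n) ` Pi UNIV Bs"
  proof
    fix b assume "b \<in> Bs n"
    obtain f where "f \<in> Pi UNIV Bs" using assms by (metis Pi_eq_empty all_not_in_conv)
    with \<open>b \<in> Bs n\<close> have "f(n := b) \<in> Pi UNIV Bs" by auto
    then show "b \<in> (\<lambda>f. f n) ` Pi UNIV Bs" by (metis fun_upd_same image_eqI)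
  qed
qed

lemma restr_simps:
  "restrA (F, P) Root = (if P = {} then {} else F)"
  "restrB (F, P) Root = (if F = {} then {} else P)"
  "restrA (F, P) (Hist n) = (if P = {} then {} else {sa \<in> F. fst sa = n})"
  "restrB (F, P) (Hist n) = (if \<exists>sa\<in>F. fst sa = n then P else {})"
  by (auto simp: restrA_def restrB_def)

lemma restrA_subset: "restrA R h \<subseteq> fst R"
  by (auto simp: restrA_def)

lemma restrB_if_ann_reaches:
  assumes "ann_reaches h sa" and "sa \<in> F" and "P \<noteq> {}"
  shows "restrB (F, P) h = P"
  using assms by (cases h) (auto simp: restr_simps ann_reaches_def)

lemma payA_eq: "payA eps va (n, a) sb = va a (sb n) - eps * real n"
  by (simp add: payA_def uA_def outcome_def)

lemma payB_eq: "payB vb sb sa = vb (snd sa) (sb (fst sa))"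
  by (simp add: payB_def uB_def outcome_def)

subsection \<open>Conditional B-dominance for Ann\<close>

lemma condB_domA_if_strictly_dominated:
  assumes "s \<in> F" and "t \<in> F" and "P \<noteq> {}"
    and "\<forall>sb\<in>P. payA eps va s sb < payA eps va t sb"
  shows "condB_domA eps va (F, P) s"
proof -
  have "weakly_dominated (payA eps va) F Q s t" if "Q \<subseteq> P" "Q \<noteq> {}" for Q
    using that assms unfolding weakly_dominated_def by (fastforce intro: less_imp_le)
  then have "B_dominated (payA eps va) F P s"
    using assms(2) unfolding B_dominated_def by blast
  moreover have "restrA (F, P) Root = F" and "restrB (F, P) Root = P"
    using assms(1,3) by (auto simp: restr_simps)
  moreover have "F \<times> P \<noteq> {}" using assms(1,3) by blast
  ultimately show ?thesis
    unfolding condB_domA_def ann_infosets_def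
    by (intro bexI[of _ Root]) (simp_all add: ann_reaches_def)
qed

text \<open>
  Only the deviations \<open>t\<close> to other histories need to be excluded: against Bob's strategies
  answering \<open>n\<close> with \<open>a\<^sup>*\<^sub>b\<close>, no strategy at \<open>n\<close> does better than \<open>(n, a\<^sup>*\<^sub>a)\<close>, and a
  strategy elsewhere does not see Bob's action at \<open>n\<close>.
\<close>
lemma not_condB_domA_best_at:
  assumes "(n, aa) \<in> F" and "\<forall>k. Bs k \<noteq> {}" and "ab \<in> Bs n"
    and "\<forall>a. va a ab \<le> va aa ab"
    and "\<forall>t\<in>F. fst t \<noteq> n \<longrightarrow> (\<exists>sb\<in>Pi UNIV Bs. payA eps va t sb < va aa ab - eps * real n)"
  shows "\<not> condB_domA eps va (F, Pi UNIV Bs) (n, aa)"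
proof
  assume "condB_domA eps va (F, Pi UNIV Bs) (n, aa)"
  then obtain h where "ann_reaches h (n, aa)"
    and dom: "B_dominated (payA eps va)
      (restrA (F, Pi UNIV Bs) h) (restrB (F, Pi UNIV Bs) h) (n, aa)"
    by (auto simp: condB_domA_def)
  have "Pi UNIV Bs \<noteq> {}" using assms(2) by simp
  with \<open>ann_reaches h (n, aa)\<close> assms(1) have restrB: "restrB (F, Pi UNIV Bs) h = Pi UNIV Bs"
    by (rule restrB_if_ann_reaches)
  define Q where "Q = {sb \<in> Pi UNIV Bs. sb n = ab}"
  obtain sb0 where "sb0 \<in> Pi UNIV Bs" using \<open>Pi UNIV Bs \<noteq> {}\<close> by blast
  then have "sb0(n := ab) \<in> Q" using assms(3) by (auto simp: Q_def)
  moreover have "Q \<subseteq> restrB (F, Pi UNIV Bs) h" by (auto simp: Q_def restrB)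
  ultimately obtain t where "t \<in> restrA (F, Pi UNIV Bs) h"
    and wd: "weakly_dominated (payA eps va) (restrA (F, Pi UNIV Bs) h) Q (n, aa) t"
    using dom unfolding B_dominated_def by blast
  then have "t \<in> F" using restrA_subset by fastforce
  obtain n' a' where t: "t = (n', a')" by fastforce
  have pay_aa: "payA eps va (n, aa) sb = va aa ab - eps * real n" if "sb \<in> Q" for sb
    using that by (simp add: payA_eq Q_def)
  from wd have le: "\<forall>sb\<in>Q. payA eps va (n, aa) sb \<le> payA eps va t sb"
    and lt: "\<exists>sb\<in>Q. payA eps va (n, aa) sb < payA eps va t sb"
    unfolding weakly_dominated_def by blast+
  show False
  proof (cases "n' = n")
    case True
    from lt obtain sb where "sb \<in> Q" "payA eps va (n, aa) sb < payA eps va t sb" by blast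
    moreover have "payA eps va t sb = va a' ab - eps * real n"
      using \<open>sb \<in> Q\<close> True t by (simp add: payA_eq Q_def)
    ultimately show False using pay_aa assms(4)[rule_format, of a'] by fastforce
  next
    case False
    then obtain sb where sb: "sb \<in> Pi UNIV Bs" and "payA eps va t sb < va aa ab - eps * real n"
      using assms(5) \<open>t \<in> F\<close> t by auto
    moreover have "sb(n := ab) \<in> Q" using sb assms(3) by (auto simp: Q_def)
    moreover have "payA eps va t (sb(n := ab)) = payA eps va t sb"
      using False t by (simp add: payA_eq)
    ultimately show False using le pay_aa by fastforce
  qed
qed

subsection \<open>Conditional B-dominance for Bob\<close>

text \<open>
  Bob's choices at different histories do not interact, so on a product of action sets his
  conditional B-dominance reduces to the following local notion at a single history.
\<close>
definition bob_dominated_at ::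
    "('a \<Rightarrow> 'b \<Rightarrow> real) \<Rightarrow> (nat \<times> 'a) set \<Rightarrow> (nat \<Rightarrow> 'b set) \<Rightarrow> nat \<Rightarrow> 'b \<Rightarrow> bool" where
  "bob_dominated_at vb F Bs n b \<longleftrightarrow> {sa \<in> F. fst sa = n} \<noteq> {} \<and>
     B_dominated (\<lambda>b sa. vb (snd sa) b) (Bs n) {sa \<in> F. fst sa = n} b"

lemma weakly_dominated_payB_iff:
  assumes "\<forall>sa\<in>Q. fst sa = n" and "sb \<in> Pi UNIV Bs" and "t \<in> Pi UNIV Bs"
  shows "weakly_dominated (payB vb) (Pi UNIV Bs) Q sb t \<longleftrightarrow>
         weakly_dominated (\<lambda>b sa. vb (snd sa) b) (Bs n) Q (sb n) (t n)"
  using assms by (auto simp: weakly_dominated_def payB_eq)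

lemma B_dominated_payB_Pi_iff:
  assumes "\<forall>sa\<in>A. fst sa = n" and sb: "sb \<in> Pi UNIV Bs"
  shows "B_dominated (payB vb) (Pi UNIV Bs) A sb \<longleftrightarrow>
         B_dominated (\<lambda>b sa. vb (snd sa) b) (Bs n) A (sb n)"
  unfolding B_dominated_def
proof (intro iffI allI impI)
  fix Q assume Q: "Q \<subseteq> A \<and> Q \<noteq> {}"
  then have fst_Q: "\<forall>sa\<in>Q. fst sa = n" using assms(1) by blast
  {
    assume "\<forall>Q. Q \<subseteq> A \<and> Q \<noteq> {} \<longrightarrow>
              (\<exists>t\<in>Pi UNIV Bs. weakly_dominated (payB vb) (Pi UNIV Bs) Q sb t)"
    then obtain t where t: "t \<in> Pi UNIV Bs" and "weakly_dominated (payB vb) (Pi UNIV Bs) Q sb t"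
      using Q by blast
    with fst_Q sb have "weakly_dominated (\<lambda>b sa. vb (snd sa) b) (Bs n) Q (sb n) (t n)"
      by (simp only: weakly_dominated_payB_iff)
    moreover have "t n \<in> Bs n" using t by blast
    ultimately show "\<exists>b'\<in>Bs n. weakly_dominated (\<lambda>b sa. vb (snd sa) b) (Bs n) Q (sb n) b'"
      by blast
  next
    assume "\<forall>Q. Q \<subseteq> A \<and> Q \<noteq> {} \<longrightarrow>
              (\<exists>b'\<in>Bs n. weakly_dominated (\<lambda>b sa. vb (snd sa) b) (Bs n) Q (sb n) b')"
    then obtain b' where "b' \<in> Bs n"
      and wd: "weakly_dominated (\<lambda>b sa. vb (snd sa) b) (Bs n) Q (sb n) b'"
      using Q by blast
    then have t: "sb(n := b') \<in> Pi UNIV Bs" using sb by auto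
    with fst_Q sb wd have "weakly_dominated (payB vb) (Pi UNIV Bs) Q sb (sb(n := b'))"
      by (simp only: weakly_dominated_payB_iff fun_upd_same)
    with t show "\<exists>t\<in>Pi UNIV Bs. weakly_dominated (payB vb) (Pi UNIV Bs) Q sb t"
      by blast
  }
qed

lemma condB_domB_Pi_iff:
  assumes "\<forall>n. Bs n \<noteq> {}" and sb: "sb \<in> Pi UNIV Bs"
  shows "condB_domB vb (F, Pi UNIV Bs) sb \<longleftrightarrow> (\<exists>n. bob_dominated_at vb F Bs n (sb n))"
proof -
  have "Pi UNIV Bs \<noteq> {}" using assms(1) by simp
  then have "restrB (F, Pi UNIV Bs) (Hist n) \<times> restrA (F, Pi UNIV Bs) (Hist n) \<noteq> {} \<and>
      B_dominated (payB vb) (restrB (F, Pi UNIV Bs) (Hist n)) (restrA (F, Pi UNIV Bs) (Hist n)) sb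
      \<longleftrightarrow> bob_dominated_at vb F Bs n (sb n)" for n
    using B_dominated_payB_Pi_iff[of "{sa \<in> F. fst sa = n}" n sb Bs vb] sb
    by (auto simp: restr_simps bob_dominated_at_def)
  moreover have "condB_domB vb (F, Pi UNIV Bs) sb \<longleftrightarrow> (\<exists>n.
      restrB (F, Pi UNIV Bs) (Hist n) \<times> restrA (F, Pi UNIV Bs) (Hist n) \<noteq> {} \<and>
      B_dominated (payB vb) (restrB (F, Pi UNIV Bs) (Hist n)) (restrA (F, Pi UNIV Bs) (Hist n)) sb)"
    by (auto simp: condB_domB_def bob_infosets_def bob_reaches_def)
  ultimately show ?thesis by simp
qed

lemma snd_Uop_Pi:
  assumes "\<forall>n. Bs n \<noteq> {}"
  shows "snd (Uop eps va vb (F, Pi UNIV Bs)) =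
         Pi UNIV (\<lambda>n. {b \<in> Bs n. \<not> bob_dominated_at vb F Bs n b})"
proof -
  have "snd (Uop eps va vb (F, Pi UNIV Bs)) = {sb \<in> Pi UNIV Bs. \<not> condB_domB vb (F, Pi UNIV Bs) sb}"
    by (simp add: Uop_def)
  moreover have "sb \<in> Pi UNIV Bs \<and> \<not> condB_domB vb (F, Pi UNIV Bs) sb \<longleftrightarrow>
      sb \<in> Pi UNIV (\<lambda>n. {b \<in> Bs n. \<not> bob_dominated_at vb F Bs n b})" for sb
  proof
    assume "sb \<in> Pi UNIV Bs \<and> \<not> condB_domB vb (F, Pi UNIV Bs) sb"
    then show "sb \<in> Pi UNIV (\<lambda>n. {b \<in> Bs n. \<not> bob_dominated_at vb F Bs n b})"
      using condB_domB_Pi_iff[OF assms, of sb vb F] by (simp add: Pi_iff)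
  next
    assume sb: "sb \<in> Pi UNIV (\<lambda>n. {b \<in> Bs n. \<not> bob_dominated_at vb F Bs n b})"
    then have "sb \<in> Pi UNIV Bs" by (simp add: Pi_iff)
    with sb show "sb \<in> Pi UNIV Bs \<and> \<not> condB_domB vb (F, Pi UNIV Bs) sb"
      using condB_domB_Pi_iff[OF assms, of sb vb F] by (simp add: Pi_iff)
  qed
  ultimately show ?thesis by (simp add: set_eq_iff)
qed

lemma best_reply_not_bob_dominated:
  assumes "(n, a) \<in> F" and "\<forall>b'\<in>Bs n. vb a b' \<le> vb a b"
  shows "\<not> bob_dominated_at vb F Bs n b"
proof
  assume "bob_dominated_at vb F Bs n b"
  then obtain b' where "b' \<in> Bs n" "vb a b < vb a b'"
    using assms(1) by (force simp: bob_dominated_at_def B_dominated_def weakly_dominated_def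
        dest: spec[of _ "{(n, a)}"])
  then show False using assms(2) by fastforce
qed

lemma bob_undominated_nonempty:
  fixes Bs :: "nat \<Rightarrow> 'b::finite set"
  assumes "Bs n \<noteq> {}"
  shows "{b \<in> Bs n. \<not> bob_dominated_at vb F Bs n b} \<noteq> {}"
proof (cases "\<exists>a. (n, a) \<in> F")
  case False
  then show ?thesis using assms by (auto simp: bob_dominated_at_def)
next
  case True
  then obtain a where a: "(n, a) \<in> F" by blast
  have "Max (vb a ` Bs n) \<in> vb a ` Bs n" using assms by (intro Max_in) auto
  then obtain b where "b \<in> Bs n" "vb a b = Max (vb a ` Bs n)" by force
  then have "\<not> bob_dominated_at vb F Bs n b"
    using a by (intro best_reply_not_bob_dominated) auto
  then show ?thesis using \<open>b \<in> Bs n\<close> by blast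
qed

lemma bob_dominated_by_strict_best_reply:
  assumes "{sa \<in> F. fst sa = n} = {(n, a)}" and "b \<in> Bs n" and "c \<in> Bs n"
    and "vb a c < vb a b"
  shows "bob_dominated_at vb F Bs n c"
  unfolding bob_dominated_at_def B_dominated_def
proof (intro conjI allI impI)
  show "{sa \<in> F. fst sa = n} \<noteq> {}" using assms(1) by simp
  fix Q assume "Q \<subseteq> {sa \<in> F. fst sa = n} \<and> Q \<noteq> {}"
  then have "Q = {(n, a)}" using assms(1) by (metis subset_singleton_iff)
  then show "\<exists>b'\<in>Bs n. weakly_dominated (\<lambda>b sa. vb (snd sa) b) (Bs n) Q c b'"
    using assms(2-4) by (intro bexI[of _ b]) (simp_all add: weakly_dominated_def)
qed

lemma Uiter_0: "Uiter eps va vb 0 = (UNIV, UNIV)"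
  by (simp add: Uiter_def)

lemma Uiter_Suc: "Uiter eps va vb (Suc k) = Uop eps va vb (Uiter eps va vb k)"
  by (simp add: Uiter_def)

lemma snd_Uiter_Pi:
  fixes vb :: "'a \<Rightarrow> 'b::finite \<Rightarrow> real"
  shows "\<exists>Bs. snd (Uiter eps va vb k) = Pi UNIV Bs \<and> (\<forall>n. Bs n \<noteq> {})"
proof (induction k)
  case 0
  have "snd (Uiter eps va vb 0) = Pi UNIV (\<lambda>_. UNIV)" by (simp add: Uiter_0)
  then show ?case by blast
next
  case (Suc k)
  then obtain Bs where Bs: "snd (Uiter eps va vb k) = Pi UNIV Bs" and ne: "\<forall>n. Bs n \<noteq> {}"
    by blast
  have "Uiter eps va vb (Suc k) = Uop eps va vb (fst (Uiter eps va vb k), Pi UNIV Bs)"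
    unfolding Uiter_Suc Bs [symmetric] by simp
  then have "snd (Uiter eps va vb (Suc k)) =
      Pi UNIV (\<lambda>n. {b \<in> Bs n. \<not> bob_dominated_at vb (fst (Uiter eps va vb k)) Bs n b})"
    by (simp only: snd_Uop_Pi[OF ne])
  moreover have "\<forall>n. {b \<in> Bs n. \<not> bob_dominated_at vb (fst (Uiter eps va vb k)) Bs n b} \<noteq> {}"
    using ne by (intro allI bob_undominated_nonempty) blast
  ultimately show ?case by (intro exI conjI)
qed

subsection \<open>Iterated elimination in the money-burning game\<close>

locale money_burning =
  fixes va vb :: "'a::finite \<Rightarrow> 'b::finite \<Rightarrow> real"
    and aa :: 'a and ab :: 'b and eps m :: real
  assumes va_best: "\<forall>x y. (x, y) \<noteq> (aa, ab) \<longrightarrow> va x y < va aa ab"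
    and vb_best_reply: "\<forall>y. y \<noteq> ab \<longrightarrow> vb aa y < vb aa ab"
    and va_second_best: "\<forall>x y. (x, y) \<noteq> (aa, ab) \<longrightarrow> va x y \<le> m"
    and eps_pos: "0 < eps"
    and eps_small: "eps < va aa ab - m"
begin

abbreviation ann_surv :: "nat \<Rightarrow> (nat \<times> 'a) set" where
  "ann_surv k \<equiv> fst (Uiter eps va vb k)"

abbreviation bob_surv :: "nat \<Rightarrow> (nat \<Rightarrow> 'b) set" where
  "bob_surv k \<equiv> snd (Uiter eps va vb k)"

abbreviation bob_acts :: "nat \<Rightarrow> nat \<Rightarrow> 'b set" where
  "bob_acts k n \<equiv> (\<lambda>sb. sb n) ` bob_surv k"

lemma va_le_best: "va x y \<le> va aa ab"
proof (cases "(x, y) = (aa, ab)")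
  case False
  then show ?thesis using va_best by (simp add: less_imp_le)
qed simp

lemma bob_surv_Pi: "bob_surv k = Pi UNIV (bob_acts k)"
  and bob_acts_nonempty: "bob_acts k n \<noteq> {}"
proof -
  obtain Bs where Bs: "bob_surv k = Pi UNIV Bs" and ne: "\<forall>n. Bs n \<noteq> {}"
    using snd_Uiter_Pi[of eps va vb k] by blast
  have acts: "bob_acts k = Bs"
    unfolding Bs by (rule ext, rule Pi_UNIV_projection[OF ne])
  show "bob_surv k = Pi UNIV (bob_acts k)" by (subst acts) (rule Bs)
  show "bob_acts k n \<noteq> {}" using fun_cong[OF acts, of n] ne by simp
qed

lemma bob_surv_nonempty: "bob_surv k \<noteq> {}"
  using bob_acts_nonempty by blast

lemma ann_surv_Suc:
  "ann_surv (Suc k) = {sa \<in> ann_surv k. \<not> condB_domA eps va (ann_surv k, bob_surv k) sa}"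
  by (simp add: Uiter_Suc Uop_def)

lemma bob_acts_Suc:
  "bob_acts (Suc k) n = {b \<in> bob_acts k n. \<not> bob_dominated_at vb (ann_surv k) (bob_acts k) n b}"
proof -
  let ?Bs' = "\<lambda>n. {b \<in> bob_acts k n. \<not> bob_dominated_at vb (ann_surv k) (bob_acts k) n b}"
  have ne: "\<forall>n. bob_acts k n \<noteq> {}" using bob_acts_nonempty by blast
  have "Uiter eps va vb (Suc k) = Uop eps va vb (ann_surv k, Pi UNIV (bob_acts k))"
    by (simp add: Uiter_Suc flip: bob_surv_Pi)
  then have "bob_surv (Suc k) = Pi UNIV ?Bs'"
    by (simp only: snd_Uop_Pi[OF ne])
  moreover have "\<forall>n. ?Bs' n \<noteq> {}"
    using ne by (intro allI bob_undominated_nonempty) blast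
  then have "(\<lambda>sb. sb n) ` Pi UNIV ?Bs' = ?Bs' n" by (rule Pi_UNIV_projection)
  ultimately show ?thesis by (simp only:)
qed

lemma ann_surv_Suc_subset: "ann_surv (Suc k) \<subseteq> ann_surv k"
  using ann_surv_Suc by blast

lemma decseq_bob_acts: "decseq (\<lambda>k. bob_acts k n)"
  by (rule decseq_SucI) (auto simp: bob_acts_Suc)

lemma ab_survives:
  assumes "(n, aa) \<in> ann_surv k" and "ab \<in> bob_acts k n"
  shows "ab \<in> bob_acts (Suc k) n"
proof -
  have "vb aa y \<le> vb aa ab" for y
    using vb_best_reply by (cases "y = ab") (simp_all add: less_imp_le)
  then have "\<not> bob_dominated_at vb (ann_surv k) (bob_acts k) n ab"
    using assms(1) by (intro best_reply_not_bob_dominated) auto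
  then show ?thesis using assms(2) by (simp add: bob_acts_Suc)
qed

lemma ab_forced:
  assumes "{sa \<in> ann_surv k. fst sa = n} = {(n, aa)}" and "ab \<in> bob_acts k n"
  shows "bob_acts (Suc k) n = {ab}"
proof -
  have "c = ab" if "c \<in> bob_acts (Suc k) n" for c
  proof (rule ccontr)
    assume "c \<noteq> ab"
    then have "bob_dominated_at vb (ann_surv k) (bob_acts k) n c"
      using that assms vb_best_reply
      by (intro bob_dominated_by_strict_best_reply[of _ _ aa ab]) (auto simp: bob_acts_Suc)
    then show False using that by (simp add: bob_acts_Suc)
  qed
  moreover have "ab \<in> bob_acts (Suc k) n"
    using assms by (intro ab_survives) auto
  ultimately show ?thesis by blast
qed

lemma aa_survives_step:
  assumes "(n, aa) \<in> ann_surv k" and "ab \<in> bob_acts k n"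
    and "\<forall>t\<in>ann_surv k. fst t \<noteq> n \<longrightarrow>
           (\<exists>sb\<in>bob_surv k. payA eps va t sb < va aa ab - eps * real n)"
  shows "(n, aa) \<in> ann_surv (Suc k)" and "ab \<in> bob_acts (Suc k) n"
proof -
  have "\<not> condB_domA eps va (ann_surv k, Pi UNIV (bob_acts k)) (n, aa)"
    using assms bob_acts_nonempty va_le_best
    by (intro not_condB_domA_best_at) (simp_all flip: bob_surv_Pi)
  then show "(n, aa) \<in> ann_surv (Suc k)"
    using assms(1) by (simp add: ann_surv_Suc flip: bob_surv_Pi)
  show "ab \<in> bob_acts (Suc k) n" using assms(1,2) by (rule ab_survives)
qed

lemma zero_aa_survives: "(0, aa) \<in> ann_surv k \<and> ab \<in> bob_acts k 0"
proof (induction k)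
  case 0
  have "ab \<in> bob_acts 0 0" by (rule image_eqI[of _ _ "\<lambda>_. ab"]) (simp_all add: Uiter_0)
  then show ?case by (simp add: Uiter_0)
next
  case (Suc k)
  have "\<exists>sb\<in>bob_surv k. payA eps va (n', a) sb < va aa ab - eps * real 0" if "n' \<noteq> 0" for n' a
  proof -
    obtain sb where "sb \<in> bob_surv k" using bob_surv_nonempty by blast
    moreover have "0 < eps * real n'" using eps_pos that by simp
    then have "va a (sb n') - eps * real n' < va aa ab"
      using va_le_best[of a "sb n'"] by linarith
    ultimately show ?thesis by (auto simp: payA_eq)
  qed
  then show ?case
    using Suc aa_survives_step[of 0 k] by fastforce
qed

definition guarantees :: "nat \<Rightarrow> real \<Rightarrow> bool" where
  "guarantees k c \<longleftrightarrow> (\<exists>t\<in>ann_surv k. \<forall>sb\<in>bob_surv k. c \<le> payA eps va t sb)"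

lemma aa_survives_unless_guaranteed:
  assumes "\<forall>k. \<not> guarantees k (va aa ab - eps * real n)"
  shows "(n, aa) \<in> ann_surv k \<and> ab \<in> bob_acts k n"
proof (induction k)
  case 0
  have "ab \<in> bob_acts 0 n" by (rule image_eqI[of _ _ "\<lambda>_. ab"]) (simp_all add: Uiter_0)
  then show ?case by (simp add: Uiter_0)
next
  case (Suc k)
  have "\<forall>t\<in>ann_surv k. \<exists>sb\<in>bob_surv k. payA eps va t sb < va aa ab - eps * real n"
    using assms unfolding guarantees_def by (meson not_le)
  then show ?case
    using Suc aa_survives_step[of n k] by blast
qed

lemma guarantee_excludes_other_actions:
  assumes "guarantees k c" and "m - eps * real n < c" and "(n, a) \<in> ann_surv (Suc k)"
  shows "a = aa"
proof (rule ccontr)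
  assume "a \<noteq> aa"
  obtain t where t: "t \<in> ann_surv k" and tc: "\<forall>sb\<in>bob_surv k. c \<le> payA eps va t sb"
    using assms(1) unfolding guarantees_def by blast
  have "\<forall>sb\<in>bob_surv k. payA eps va (n, a) sb < payA eps va t sb"
  proof
    fix sb assume "sb \<in> bob_surv k"
    moreover have "va a (sb n) \<le> m" using va_second_best \<open>a \<noteq> aa\<close> by simp
    ultimately show "payA eps va (n, a) sb < payA eps va t sb"
      using tc assms(2) unfolding payA_eq by fastforce
  qed
  moreover have "(n, a) \<in> ann_surv k" using assms(3) ann_surv_Suc_subset by blast
  ultimately have "condB_domA eps va (ann_surv k, bob_surv k) (n, a)"
    using t bob_surv_nonempty by (intro condB_domA_if_strictly_dominated)
  then show False using assms(3) ann_surv_Suc by blast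
qed

lemma guarantee_upgrade:
  assumes "guarantees k c" and "m - eps * real n < c"
  shows "\<exists>k'. guarantees k' (va aa ab - eps * real n)"
proof (rule ccontr)
  assume none: "\<not> ?thesis"
  then have alive: "(n, aa) \<in> ann_surv j \<and> ab \<in> bob_acts j n" for j
    using aa_survives_unless_guaranteed by blast
  have "{sa \<in> ann_surv (Suc k). fst sa = n} = {(n, aa)}"
    using alive guarantee_excludes_other_actions[OF assms] by fastforce
  then have "bob_acts (Suc (Suc k)) n = {ab}"
    using alive[of "Suc k"] by (intro ab_forced) blast+
  then have "\<forall>sb\<in>bob_surv (Suc (Suc k)). sb n = ab"
    using imageI[of _ _ "\<lambda>sb. sb n"] by (metis singletonD)
  then have "\<forall>sb\<in>bob_surv (Suc (Suc k)). va aa ab - eps * real n \<le> payA eps va (n, aa) sb"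
    by (simp add: payA_eq)
  then have "guarantees (Suc (Suc k)) (va aa ab - eps * real n)"
    unfolding guarantees_def using alive by blast
  then show False using none by blast
qed

lemma eventually_guarantees_best: "\<exists>k. guarantees k (va aa ab)"
proof -
  define L where "L = Min (range (va aa))"
  have "L \<le> va aa y" for y unfolding L_def by simp
  then have "guarantees 0 L"
    unfolding guarantees_def by (intro bexI[of _ "(0, aa)"]) (simp_all add: Uiter_0 payA_eq)
  moreover obtain N :: nat where "m - L < real N * eps"
    using reals_Archimedean3[OF eps_pos] by blast
  ultimately have "\<exists>k. guarantees k (va aa ab - eps * real N)"
    by (intro guarantee_upgrade[of 0 L]) (simp_all add: mult.commute)
  moreover have "\<exists>k. guarantees k (va aa ab)"
    if "\<exists>k. guarantees k (va aa ab - eps * real n)" for n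
    using that
  proof (induction n)
    case (Suc n)
    have "m - eps * real n < va aa ab - eps * real (Suc n)"
      using eps_small by (simp add: algebra_simps)
    then show ?case using Suc guarantee_upgrade by blast
  qed simp
  ultimately show ?thesis by blast
qed

lemma payA_less_best:
  assumes "(n, a) \<noteq> (0, aa)"
  shows "payA eps va (n, a) sb < va aa ab"
proof (cases "n = 0")
  case True
  then have "(a, sb 0) \<noteq> (aa, ab)" using assms by simp
  then show ?thesis using va_best True by (simp add: payA_eq)
next
  case False
  then have "0 < eps * real n" using eps_pos by simp
  then show ?thesis using va_le_best[of a "sb n"] by (simp add: payA_eq)
qed

lemma ann_surv_after_best_guarantee:
  assumes "guarantees k (va aa ab)"
  shows "ann_surv (Suc k) = {(0, aa)}"
proof -
  obtain t where t: "t \<in> ann_surv k" and tc: "\<forall>sb\<in>bob_surv k. va aa ab \<le> payA eps va t sb"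
    using assms unfolding guarantees_def by blast
  have "s = (0, aa)" if s: "s \<in> ann_surv (Suc k)" for s
  proof (rule ccontr)
    assume "s \<noteq> (0, aa)"
    then have "\<forall>sb\<in>bob_surv k. payA eps va s sb < payA eps va t sb"
      using tc payA_less_best by (metis order.strict_trans2 prod.collapse)
    then have "condB_domA eps va (ann_surv k, bob_surv k) s"
      using s t bob_surv_nonempty ann_surv_Suc_subset
      by (intro condB_domA_if_strictly_dominated) blast+
    then show False using s ann_surv_Suc by blast
  qed
  then show ?thesis using zero_aa_survives by blast
qed

lemma bob_survivor_playing_ab: "\<exists>sb. (\<forall>j. sb \<in> bob_surv j) \<and> sb 0 = ab"
proof -
  define g where "g n = (SOME b. b \<in> (\<Inter>k. bob_acts k n))" for n
  have "(\<Inter>k. bob_acts k n) \<noteq> {}" for n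
    using decseq_bob_acts bob_acts_nonempty by (rule Inter_decseq_nonempty)
  then have "g n \<in> (\<Inter>k. bob_acts k n)" for n
    unfolding g_def some_in_eq .
  then have g: "g n \<in> bob_acts k n" for n k
    using INT_D by blast
  have "g(0 := ab) \<in> bob_surv j" for j
  proof (subst bob_surv_Pi, rule Pi_I)
    show "(g(0 := ab)) n \<in> bob_acts j n" for n
      using g zero_aa_survives by (cases "n = 0") simp_all
  qed
  then show ?thesis by (intro exI[of _ "g(0 := ab)"]) simp
qed

lemma outcomes_Uinf: "outcomes (Uinf eps va vb) = {((0, aa), ab)}"
proof -
  obtain k where "guarantees k (va aa ab)" using eventually_guarantees_best by blast
  then have ann_k: "ann_surv (Suc k) = {(0, aa)}" by (rule ann_surv_after_best_guarantee)
  have "{sa \<in> ann_surv (Suc k). fst sa = 0} = {(0, aa)}" unfolding ann_k by auto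
  then have bob_k: "bob_acts (Suc (Suc k)) 0 = {ab}"
    using zero_aa_survives[of "Suc k"] by (intro ab_forced) blast+
  obtain sb0 where "\<forall>j. sb0 \<in> bob_surv j" and "sb0 0 = ab"
    using bob_survivor_playing_ab by blast
  then have "sb0 \<in> snd (Uinf eps va vb)" by (simp add: Uinf_def)
  moreover have "(0, aa) \<in> fst (Uinf eps va vb)" using zero_aa_survives by (simp add: Uinf_def)
  moreover have "((0, aa), ab) = outcome (0, aa) sb0"
    using \<open>sb0 0 = ab\<close> by (simp add: outcome_def)
  ultimately have "((0, aa), ab) \<in> outcomes (Uinf eps va vb)"
    unfolding outcomes_def by blast
  moreover have "z = ((0, aa), ab)" if "z \<in> outcomes (Uinf eps va vb)" for z
  proof -
    from that obtain sa sb where z: "z = outcome sa sb"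
      and "sa \<in> fst (Uinf eps va vb)" and "sb \<in> snd (Uinf eps va vb)"
      unfolding outcomes_def by blast
    then have "sa \<in> ann_surv (Suc k)" and "sb \<in> bob_surv (Suc (Suc k))"
      by (simp_all add: Uinf_def)
    then have "sa = (0, aa)" and "sb 0 \<in> bob_acts (Suc (Suc k)) 0"
      using ann_k by auto
    then show ?thesis using z bob_k by (simp add: outcome_def)
  qed
  ultimately show ?thesis by blast
qed

end

theorem proposition10:
  fixes va vb :: "'a::finite \<Rightarrow> 'b::finite \<Rightarrow> real"
    and aa :: 'a and ab :: 'b
  assumes "\<forall>x y. (x, y) \<noteq> (aa, ab) \<longrightarrow> va x y < va aa ab"
    and "\<forall>y. y \<noteq> ab \<longrightarrow> vb aa y < vb aa ab"
  shows "\<exists>\<delta>>0. \<forall>eps. 0 < eps \<and> eps < \<delta> \<longrightarrow>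
           outcomes (Uinf eps va vb) = {((0, aa), ab)}"
proof -
  obtain m where "m < va aa ab" and m: "\<forall>x y. (x, y) \<noteq> (aa, ab) \<longrightarrow> va x y \<le> m"
    using strict_max_gap[of "(aa, ab)" "case_prod va"] assms(1) by auto
  have "outcomes (Uinf eps va vb) = {((0, aa), ab)}" if "0 < eps" "eps < va aa ab - m" for eps
  proof -
    interpret money_burning va vb aa ab eps m
      using assms m that by unfold_locales
    show ?thesis by (rule outcomes_Uinf)
  qed
  then show ?thesis using \<open>m < va aa ab\<close> by (intro exI[of _ "va aa ab - m"]) auto
qed

end
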